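(* Let $B(X)\in\mathbb Z[X]$ be monic and irreducible, and suppose $B$ has a non-real root $\beta$ such that every root of $B$ other than $\beta$ and $\overline\beta$ has absolute value strictly less than $|\beta|$. Let $\alpha\in\mathbb Z$ with $|\alpha|>1$, and suppose there are coprime positive integers $p,q$ with $\alpha^{2p}=(\beta\overline\beta)^q$. Then $B(X)=X^2+aX+N$ for some $a\in\mathbb Z$ and positive integer $N$ with $a^2-4N<0$, and there is an integer $b>1$ with $N=b^p$ and $|\alpha|=b^{q/2}$; in particular, if $b$ is not a perfect square then $q$ is even. *)

theory Defs
  imports Complex_Main "HOL-Computational_Algebra.Computational_Algebra"
begin

end

theory Submission
  imports Defs "Subresultants.Subresultant_Gcd" "HOL-Computational_Algebra.Field_as_Ring"
begin

text \<open>Every root \<open>\<gamma>\<close> of \<open>B\<close> is a conjugate of \<open>\<beta>\<close>; a conjugation moving \<open>\<beta>\<close> to \<open>\<gamma>\<close>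
  moves \<open>cnj \<beta>\<close> to some root \<open>\<delta>\<close> and fixes the integer \<open>(\<beta> cnj \<beta>)\<^sup>q = \<alpha>\<^sup>2\<^sup>p\<close>, so
  \<open>|\<gamma>| |\<delta>| = |\<beta>|\<^sup>2\<close>. As \<open>|\<delta>| \<le> |\<beta>|\<close>, this gives \<open>|\<gamma>| \<ge> |\<beta>|\<close>, hence \<open>\<gamma> \<in> {\<beta>, cnj \<beta>}\<close>.
  The conjugation argument is made effective with the resultant \<open>Res\<^sub>Y(B(Y), X\<^sup>q Y\<^sup>q - \<alpha>\<^sup>2\<^sup>p)\<close>:
  it is an integer polynomial vanishing at \<open>\<beta>\<close>, hence divisible by the irreducible \<open>B\<close>.
  Thus \<open>B = (X - \<beta>)(X - cnj \<beta>)\<close>, and \<open>N = |\<beta>|\<^sup>2\<close> satisfies \<open>N\<^sup>q = (\<alpha>\<^sup>2)\<^sup>p\<close>; coprimality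
  of \<open>p\<close> and \<open>q\<close> makes \<open>N\<close> and \<open>\<alpha>\<^sup>2\<close> the \<open>p\<close>-th and \<open>q\<close>-th powers of one integer \<open>b\<close>.\<close>

lemma resultant_eq_0_iff_common_root:
  fixes f g :: "complex poly"
  assumes "f \<noteq> 0"
  shows "resultant f g = 0 \<longleftrightarrow> (\<exists>z. poly f z = 0 \<and> poly g z = 0)"
proof
  assume "resultant f g = 0"
  then have "degree (gcd f g) \<noteq> 0" by (simp add: resultant_0_gcd)
  then obtain z where "poly (gcd f g) z = 0"
    by (metis fundamental_theorem_of_algebra constant_degree)
  then have "poly f z = 0" "poly g z = 0"
    by (meson dvd_trans gcd_dvd1 gcd_dvd2 poly_eq_0_iff_dvd)+
  then show "\<exists>z. poly f z = 0 \<and> poly g z = 0" by blast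
next
  assume "\<exists>z. poly f z = 0 \<and> poly g z = 0"
  then obtain z where "[:-z, 1:] dvd f" "[:-z, 1:] dvd g" by (auto simp: poly_eq_0_iff_dvd)
  then have "[:-z, 1:] dvd gcd f g" by simp
  moreover have "gcd f g \<noteq> 0" using assms by simp
  ultimately have "degree [:-z, 1:] \<le> degree (gcd f g)" by (rule dvd_imp_degree_le)
  then have "degree (gcd f g) \<noteq> 0" by simp
  then show "resultant f g = 0" by (simp add: resultant_0_gcd)
qed

lemma poly_of_int_poly_cnj:
  "poly (map_poly (of_int :: int \<Rightarrow> complex) P) (cnj z) = cnj (poly (map_poly of_int P) z)"
  by (simp add: poly_altdef)

lemma poly_of_int_poly_eq_0_if_dvd:
  fixes B R :: "int poly"
  assumes "B dvd R" "poly (map_poly (of_int :: int \<Rightarrow> complex) B) z = 0"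
  shows "poly (map_poly (of_int :: int \<Rightarrow> complex) R) z = 0"
  using assms by (auto simp: of_int_poly_hom.hom_mult elim!: dvdE)

lemma irreducible_dvd_if_common_root:
  fixes B R :: "int poly"
  assumes irr: "irreducible B"
    and "poly (map_poly (of_int :: int \<Rightarrow> complex) B) z = 0"
    and "poly (map_poly (of_int :: int \<Rightarrow> complex) R) z = 0"
  shows "B dvd R"
proof -
  have "map_poly (of_int :: int \<Rightarrow> complex) B \<noteq> 0" using irr by auto
  then have "resultant (map_poly (of_int :: int \<Rightarrow> complex) B) (map_poly of_int R) = 0"
    using assms by (auto simp: resultant_eq_0_iff_common_root)
  then have "resultant B R = 0" by (simp add: of_int_hom.resultant_hom)
  then have "\<not> is_unit (gcd B R)" by (auto simp: resultant_0_gcd is_unit_poly_iff)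
  moreover obtain h where Bh: "B = gcd B R * h" by (meson gcd_dvd1 dvdE)
  ultimately have "is_unit h" using irreducibleD[OF irr] by blast
  then have "B dvd gcd B R" using Bh by (metis mult_unit_dvd_iff dvd_refl)
  then show ?thesis using gcd_dvd2 dvd_trans by blast
qed

lemma rsquarefree_of_int_poly_if_irreducible:
  fixes B :: "int poly"
  assumes irr: "irreducible B"
  shows "rsquarefree (map_poly (of_int :: int \<Rightarrow> complex) B)"
proof (unfold rsquarefree_roots, intro allI notI)
  fix z
  let ?B = "map_poly (of_int :: int \<Rightarrow> complex) B"
  assume z: "poly ?B z = 0 \<and> poly (pderiv ?B) z = 0"
  then have "B dvd pderiv B"
    by (intro irreducible_dvd_if_common_root[OF irr, of z]) (simp_all add: of_int_hom.map_poly_pderiv)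
  moreover have "degree B \<noteq> 0"
  proof
    assume "degree B = 0"
    then obtain c where "B = [:c:]" by (rule degree_eq_zeroE)
    with z irr show False by (cases "c = 0") (auto simp: map_poly_pCons)
  qed
  then have "pderiv B \<noteq> 0" by (simp add: pderiv_eq_0_iff)
  ultimately have "degree B \<le> degree (pderiv B)" by (simp add: dvd_imp_degree_le)
  with \<open>degree B \<noteq> 0\<close> show False by (simp add: degree_pderiv)
qed

lemma rsquarefree_monic_with_two_roots:
  fixes P :: "complex poly"
  assumes "rsquarefree P" "lead_coeff P = 1" "{z. poly P z = 0} = {u, v}" "u \<noteq> v"
  shows "P = [:u * v, -(u + v), 1:]"
proof -
  have "P = Polynomial.smult (lead_coeff P) (\<Prod>z | poly P z = 0. [:-z, 1:])"
    using complex_poly_decompose_rsquarefree[OF assms(1)] by simp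
  also have "\<dots> = [:-u, 1:] * [:-v, 1:]" using assms(2-4) by simp
  also have "\<dots> = [:u * v, -(u + v), 1:]" by (simp add: algebra_simps)
  finally show ?thesis .
qed

text \<open>\<open>Res\<^sub>Y(B(Y), X\<^sup>q Y\<^sup>q - M)\<close>, with the resultant taken over the coefficient ring \<open>\<int>[X]\<close>.\<close>

definition power_product_resultant :: "int poly \<Rightarrow> nat \<Rightarrow> int \<Rightarrow> int poly" where
  "power_product_resultant B q M = resultant (map_poly (\<lambda>c. [:c:]) B) (monom (monom 1 q) q - [:[:M:]:])"

lemma degree_monom_minus_const:
  fixes a b :: "'a :: comm_ring_1"
  assumes "a \<noteq> 0" "q > 0"
  shows "degree (monom a q - [:b:]) = q"
proof -
  have "monom a q - [:b:] = monom a q + [:-b:]" by simp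
  also have "degree \<dots> = degree (monom a q)"
    by (rule degree_add_eq_left) (use assms in \<open>simp add: degree_monom_eq\<close>)
  finally show ?thesis using assms(1) by (simp add: degree_monom_eq)
qed

lemma poly_power_product_resultant:
  fixes B :: "int poly" and x :: complex
  assumes "x \<noteq> 0" "q > 0" "lead_coeff B = 1"
  shows "poly (map_poly of_int (power_product_resultant B q M)) x
           = resultant (map_poly of_int B) (monom (x ^ q) q - [:of_int M:])"
proof -
  let ?ev = "\<lambda>f :: int poly. poly (map_poly (of_int :: int \<Rightarrow> complex) f) x"
  interpret ev: comm_ring_hom ?ev
    by unfold_locales (simp_all add: of_int_poly_hom.hom_mult of_int_poly_hom.hom_add)
  have const: "?ev [:c:] = of_int c" for c
    by (cases "c = 0") (simp_all add: map_poly_pCons)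
  have B: "map_poly ?ev (map_poly (\<lambda>c. [:c:]) B) = map_poly of_int B"
    by (rule poly_eqI) (simp add: coeff_map_poly const)
  have G: "map_poly ?ev (monom (monom 1 q) q - [:[:M:]:]) = monom (x ^ q) q - [:of_int M:]"
    by (rule poly_eqI)
      (use assms(2) in \<open>simp add: coeff_map_poly coeff_monom coeff_pCons poly_monom const split: nat.splits\<close>)
  have "degree (map_poly ?ev (map_poly (\<lambda>c. [:c:]) B)) = degree (map_poly (\<lambda>c. [:c:]) B)"
    unfolding B using assms(3) by (simp add: degree_map_poly)
  moreover have "degree (map_poly ?ev (monom (monom 1 q) q - [:[:M:]:]))
                   = degree (monom (monom 1 q) q - [:[:M:]:])"
    unfolding G using assms(1,2) by (simp add: degree_monom_minus_const)
  ultimately show ?thesis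
    unfolding power_product_resultant_def using ev.resultant_map_poly B G by metis
qed

lemma power_product_resultant_root_iff:
  fixes B :: "int poly" and x :: complex
  assumes "x \<noteq> 0" "q > 0" "lead_coeff B = 1"
  shows "poly (map_poly of_int (power_product_resultant B q M)) x = 0
           \<longleftrightarrow> (\<exists>\<delta>. poly (map_poly of_int B) \<delta> = 0 \<and> (x * \<delta>) ^ q = of_int M)"
proof -
  have "map_poly (of_int :: int \<Rightarrow> complex) B \<noteq> 0" using assms(3) by auto
  then show ?thesis
    unfolding poly_power_product_resultant[OF assms]
    by (simp add: resultant_eq_0_iff_common_root poly_monom power_mult_distrib)
qed

lemma roots_eq_dominant_conj_pair:
  fixes B :: "int poly" and \<beta> :: complex
  assumes monic: "lead_coeff B = 1"
    and irr: "irreducible B"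
    and root: "poly (map_poly of_int B) \<beta> = 0"
    and "\<beta> \<noteq> 0"
    and dom: "\<And>z. poly (map_poly of_int B) z = 0 \<Longrightarrow> z \<noteq> \<beta> \<Longrightarrow> z \<noteq> cnj \<beta> \<Longrightarrow> cmod z < cmod \<beta>"
    and "q > 0"
    and M: "(\<beta> * cnj \<beta>) ^ q = of_int M"
  shows "{z. poly (map_poly of_int B) z = 0} = {\<beta>, cnj \<beta>}"
proof -
  let ?R = "power_product_resultant B q M"
  have cnj_root: "poly (map_poly of_int B) (cnj \<beta>) = 0"
    using root by (simp add: poly_of_int_poly_cnj)
  have "poly (map_poly of_int ?R) \<beta> = 0"
    using power_product_resultant_root_iff[OF \<open>\<beta> \<noteq> 0\<close> \<open>q > 0\<close> monic] cnj_root M by blast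
  then have "B dvd ?R" by (rule irreducible_dvd_if_common_root[OF irr root])
  have "\<gamma> = \<beta> \<or> \<gamma> = cnj \<beta>" if \<gamma>: "poly (map_poly of_int B) \<gamma> = 0" for \<gamma>
  proof (rule ccontr)
    assume other: "\<not> (\<gamma> = \<beta> \<or> \<gamma> = cnj \<beta>)"
    have "\<gamma> \<noteq> 0"
    proof
      assume "\<gamma> = 0"
      then have "B dvd [:0, 1:]"
        using \<gamma> by (intro irreducible_dvd_if_common_root[OF irr, of 0]) (simp_all add: map_poly_pCons)
      from poly_of_int_poly_eq_0_if_dvd[OF this root] \<open>\<beta> \<noteq> 0\<close> show False
        by (simp add: map_poly_pCons)
    qed
    have "poly (map_poly of_int ?R) \<gamma> = 0"
      using poly_of_int_poly_eq_0_if_dvd[OF \<open>B dvd ?R\<close> \<gamma>] .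
    then obtain \<delta> where \<delta>: "poly (map_poly of_int B) \<delta> = 0" and "(\<gamma> * \<delta>) ^ q = (\<beta> * cnj \<beta>) ^ q"
      using power_product_resultant_root_iff[OF \<open>\<gamma> \<noteq> 0\<close> \<open>q > 0\<close> monic] M by auto
    then have "cmod \<gamma> * cmod \<delta> = cmod \<beta> * cmod \<beta>"
      using \<open>q > 0\<close> by (metis power_eq_imp_eq_norm norm_mult complex_mod_cnj)
    moreover have "cmod \<delta> \<le> cmod \<beta>"
      using dom[OF \<delta>] by (cases "\<delta> = \<beta> \<or> \<delta> = cnj \<beta>") auto
    moreover have "cmod \<gamma> < cmod \<beta>" using dom[OF \<gamma>] other by blast
    ultimately show False
      by (metis mult_strict_right_mono mult_left_mono norm_ge_zero not_le zero_less_norm_iff \<open>\<beta> \<noteq> 0\<close>)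
  qed
  then show ?thesis using root cnj_root by auto
qed

lemma irreducible_with_dominant_conj_pair_is_quadratic:
  fixes B :: "int poly" and \<beta> :: complex
  assumes monic: "lead_coeff B = 1"
    and irr: "irreducible B"
    and root: "poly (map_poly of_int B) \<beta> = 0"
    and nonreal: "Im \<beta> \<noteq> 0"
    and dom: "\<And>z. poly (map_poly of_int B) z = 0 \<Longrightarrow> z \<noteq> \<beta> \<Longrightarrow> z \<noteq> cnj \<beta> \<Longrightarrow> cmod z < cmod \<beta>"
    and "q > 0"
    and M: "(\<beta> * cnj \<beta>) ^ q = of_int M"
  shows "\<exists>a N. B = [:N, a, 1:] \<and> of_int N = \<beta> * cnj \<beta> \<and> of_int a = -(\<beta> + cnj \<beta>)"
proof -
  have "\<beta> \<noteq> 0" "\<beta> \<noteq> cnj \<beta>" using nonreal by (auto simp: complex_eq_iff)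
  have "map_poly (of_int :: int \<Rightarrow> complex) B = [:\<beta> * cnj \<beta>, -(\<beta> + cnj \<beta>), 1:]"
    using rsquarefree_monic_with_two_roots[OF rsquarefree_of_int_poly_if_irreducible[OF irr]]
      roots_eq_dominant_conj_pair[OF monic irr root \<open>\<beta> \<noteq> 0\<close> dom \<open>q > 0\<close> M] monic \<open>\<beta> \<noteq> cnj \<beta>\<close>
    by (simp add: degree_map_poly)
  then have coeff_B: "of_int (coeff B n) = coeff [:\<beta> * cnj \<beta>, -(\<beta> + cnj \<beta>), 1:] n" for n
    by (metis coeff_map_poly of_int_0)
  have "B = [:coeff B 0, coeff B 1, 1:]"
  proof (rule poly_eqI)
    fix n
    have "(of_int (coeff B n) :: complex) = of_int (coeff [:coeff B 0, coeff B 1, 1:] n)"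
      using coeff_B[of n] coeff_B[of 0] coeff_B[of 1]
      by (cases n; cases "n - 1"; cases "n - 2") (auto simp: coeff_pCons split: nat.splits)
    then show "coeff B n = coeff [:coeff B 0, coeff B 1, 1:] n" by (simp only: of_int_eq_iff)
  qed
  with coeff_B[of 0] coeff_B[of 1] show ?thesis by auto
qed

lemma conj_pair_coeffs_norm_pos_discriminant_neg:
  fixes a N :: int and \<beta> :: complex
  assumes N: "of_int N = \<beta> * cnj \<beta>" and a: "of_int a = -(\<beta> + cnj \<beta>)" and "Im \<beta> \<noteq> 0"
  shows "N > 0" "a\<^sup>2 - 4 * N < 0"
proof -
  have "complex_of_real (real_of_int N) = complex_of_real (cmod \<beta> ^ 2)"
    using N complex_norm_square[of \<beta>] by simp
  then have "real_of_int N = cmod \<beta> ^ 2" by (simp only: of_real_eq_iff)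
  moreover have "\<beta> \<noteq> 0" using \<open>Im \<beta> \<noteq> 0\<close> by auto
  ultimately show "N > 0" by (metis of_int_0_less_iff zero_less_power zero_less_norm_iff)
  have "(of_int (a\<^sup>2 - 4 * N) :: complex) = (\<beta> - cnj \<beta>)\<^sup>2"
    by (simp only: of_int_diff of_int_mult of_int_power of_int_numeral N a)
      (simp add: power2_eq_square algebra_simps)
  also have "\<dots> = complex_of_real (- 4 * Im \<beta> ^ 2)"
    by (simp add: complex_eq_iff power2_eq_square)
  finally have "real_of_int (a\<^sup>2 - 4 * N) = - 4 * Im \<beta> ^ 2"
    by (metis of_real_eq_iff of_real_of_int_eq)
  moreover have "Im \<beta> ^ 2 > 0" using \<open>Im \<beta> \<noteq> 0\<close> by simp
  ultimately have "real_of_int (a\<^sup>2 - 4 * N) < 0" by linarith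
  then show "a\<^sup>2 - 4 * N < 0" by (simp only: of_int_less_0_iff)
qed

lemma coprime_exponents_common_base_nat:
  fixes n m :: nat
  assumes "p > 0" "q > 0" "coprime p q" "n ^ q = m ^ p" "n > 0"
  obtains b where "n = b ^ p" "m = b ^ q"
proof -
  have "m \<noteq> 0" using assms(1,2,4,5) by (metis gr_implies_not0 power_not_zero zero_power)
  have "is_nth_power p n"
  proof (subst is_nth_power_conv_multiplicity_nat[OF \<open>p > 0\<close>], intro allI impI)
    fix r :: nat
    assume "prime r"
    have "q * multiplicity r n = multiplicity r (n ^ q)"
      using \<open>prime r\<close> \<open>n > 0\<close> by (simp add: prime_elem_multiplicity_power_distrib)
    also have "\<dots> = p * multiplicity r m"
      unfolding \<open>n ^ q = m ^ p\<close> using \<open>prime r\<close> \<open>m \<noteq> 0\<close>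
      by (simp add: prime_elem_multiplicity_power_distrib)
    finally have "p dvd q * multiplicity r n" by (metis dvd_triv_left)
    then show "p dvd multiplicity r n" using \<open>coprime p q\<close> by (simp add: coprime_dvd_mult_right_iff)
  qed
  then obtain b where b: "n = b ^ p" by (auto elim: is_nth_powerE)
  then have "(b ^ q) ^ p = m ^ p" using \<open>n ^ q = m ^ p\<close> by (simp flip: power_mult add: mult.commute)
  then have "b ^ q = m" using \<open>p > 0\<close> power_eq_imp_eq_base[of "b ^ q" p m] by simp
  with b that show ?thesis by blast
qed

lemma coprime_exponents_common_base_int:
  fixes n m :: int
  assumes "p > 0" "q > 0" "coprime p q" "n ^ q = m ^ p" "n > 0" "m \<ge> 0"
  obtains b where "b \<ge> 0" "n = b ^ p" "m = b ^ q"
proof -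
  have "nat n ^ q = nat m ^ p" using assms(4-6) by (simp flip: nat_power_eq)
  moreover have "nat n > 0" using \<open>n > 0\<close> by simp
  ultimately obtain b where "nat n = b ^ p" "nat m = b ^ q"
    using coprime_exponents_common_base_nat[OF assms(1-3)] by blast
  then have "int (nat n) = int b ^ p" "int (nat m) = int b ^ q" by simp_all
  with assms(5,6) have "n = int b ^ p" "m = int b ^ q" by simp_all
  then show ?thesis using that[of "int b"] by simp
qed

lemma abs_eq_powr_half_if_square_eq_power:
  fixes \<alpha> b :: int
  assumes "b > 0" "\<alpha>\<^sup>2 = b ^ q"
  shows "real_of_int \<bar>\<alpha>\<bar> = real_of_int b powr (real q / 2)"
proof (rule power2_eq_imp_eq)
  have "(real_of_int b powr (real q / 2))\<^sup>2 = real_of_int b powr real q"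
    using \<open>b > 0\<close> by (simp flip: powr_realpow add: powr_powr)
  also have "\<dots> = real_of_int \<bar>\<alpha>\<bar> ^ 2"
    using assms by (simp add: powr_realpow flip: of_int_power)
  finally show "(real_of_int \<bar>\<alpha>\<bar>)\<^sup>2 = (real_of_int b powr (real q / 2))\<^sup>2" ..
qed simp_all

lemma even_exponent_if_square_eq_power_of_nonsquare:
  fixes \<alpha> b :: int
  assumes "\<alpha>\<^sup>2 = b ^ q" "b \<noteq> 0" "\<nexists>c. b = c\<^sup>2"
  shows "even q"
proof (rule ccontr)
  assume "odd q"
  then obtain k where "q = 2 * k + 1" using oddE by blast
  then have \<alpha>: "\<alpha>\<^sup>2 = (b ^ k)\<^sup>2 * b" using assms(1) by (simp add: power_add power_mult mult.commute)
  then have "(b ^ k)\<^sup>2 dvd \<alpha>\<^sup>2" by simp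
  then have "b ^ k dvd \<alpha>" by (simp add: pow_divides_pow_iff)
  then obtain e where "\<alpha> = b ^ k * e" by blast
  with \<alpha> have "(b ^ k)\<^sup>2 * e\<^sup>2 = (b ^ k)\<^sup>2 * b" by (simp add: power_mult_distrib)
  then have "b = e\<^sup>2" using \<open>b \<noteq> 0\<close> by simp
  with assms(3) show False by blast
qed

theorem mainTheorem6:
  fixes B :: "int poly" and \<beta> :: complex and \<alpha> :: int and p q :: nat
  assumes monic: "lead_coeff B = 1"
    and irred: "irreducible B"
    and root: "poly (map_poly of_int B) \<beta> = 0"
    and nonreal: "Im \<beta> \<noteq> 0"
    and dom: "\<And>z. poly (map_poly of_int B) z = 0 \<Longrightarrow> z \<noteq> \<beta> \<Longrightarrow> z \<noteq> cnj \<beta> \<Longrightarrow> cmod z < cmod \<beta>"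
    and alpha: "\<bar>\<alpha>\<bar> > 1"
    and pq: "p > 0" "q > 0" "coprime p q"
    and eq: "(of_int \<alpha> :: complex) ^ (2 * p) = (\<beta> * cnj \<beta>) ^ q"
  shows "\<exists>a N :: int. N > 0 \<and> B = [:N, a, 1:] \<and> a\<^sup>2 - 4 * N < 0 \<and>
           (\<exists>b :: int. b > 1 \<and> N = b ^ p \<and> real_of_int \<bar>\<alpha>\<bar> = real_of_int b powr (real q / 2) \<and>
              ((\<nexists>c :: int. b = c\<^sup>2) \<longrightarrow> even q))"
proof -
  have M: "(\<beta> * cnj \<beta>) ^ q = of_int (\<alpha> ^ (2 * p))" using eq by simp
  obtain a N where B: "B = [:N, a, 1:]"
    and N: "of_int N = \<beta> * cnj \<beta>" and a: "of_int a = -(\<beta> + cnj \<beta>)"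
    using irreducible_with_dominant_conj_pair_is_quadratic[OF monic irred root nonreal dom pq(2) M]
    by blast
  note N_disc = conj_pair_coeffs_norm_pos_discriminant_neg[OF N a nonreal]
  have "(of_int (N ^ q) :: complex) = of_int ((\<alpha>\<^sup>2) ^ p)" using N eq by (simp add: power_mult)
  then have "N ^ q = (\<alpha>\<^sup>2) ^ p" by (simp only: of_int_eq_iff)
  then obtain b where "b \<ge> 0" "N = b ^ p" and \<alpha>: "\<alpha>\<^sup>2 = b ^ q"
    using coprime_exponents_common_base_int[OF pq _ N_disc(1) zero_le_power2] by blast
  have "1 < \<alpha>\<^sup>2" using one_less_power[OF alpha, of 2] by simp
  have "b > 1"
  proof (rule ccontr)
    assume "\<not> b > 1"
    then have "b ^ q \<le> 1" using \<open>b \<ge> 0\<close> by (simp add: power_le_one)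
    with \<alpha> \<open>1 < \<alpha>\<^sup>2\<close> show False by simp
  qed
  moreover have "real_of_int \<bar>\<alpha>\<bar> = real_of_int b powr (real q / 2)"
    using abs_eq_powr_half_if_square_eq_power[OF _ \<alpha>] \<open>b > 1\<close> by simp
  moreover have "(\<nexists>c. b = c\<^sup>2) \<longrightarrow> even q"
    using even_exponent_if_square_eq_power_of_nonsquare[OF \<alpha>] \<open>b > 1\<close> by simp
  ultimately show ?thesis using B N_disc \<open>N = b ^ p\<close> by blast
qed

end
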